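(* Let $\beta_{H\leftarrow M},\beta_{M\leftarrow H},\rho,\gamma,\mu>0$, $l\ge0$, $p,q\in[0,1]$ with $c(p,q)+l>0$. For every solution of system (VBH) with initial condition in $\Omega$, $$\lim_{t\to+\infty}I_P(t)=\lim_{t\to+\infty}I_{NP}(t)=\lim_{t\to+\infty}I_M(t)=0.$$
   Context: Let $c(p,q):=1-p(1-q)$. System (VBH) is the ODE system $$S_P'=-\beta_{H\leftarrow M}\rho I_M\frac{qS_P}{c(p,q)+l},\qquad I_P'=\beta_{H\leftarrow M}\rho I_M\frac{qS_P}{c(p,q)+l}-\gamma I_P,$$ $$S_{NP}'=-\beta_{H\leftarrow M}\rho I_M\frac{S_{NP}}{c(p,q)+l},\qquad I_{NP}'=\beta_{H\leftarrow M}\rho I_M\frac{S_{NP}}{c(p,q)+l}-\gamma I_{NP},$$ $$I_M'=\beta_{M\leftarrow H}(1-I_M)\frac{qI_P+I_{NP}}{c(p,q)+l}-\mu I_M,$$ with constant parameters $p,q,l$. Let $\Omega:=\{(S_P,I_P,S_{NP},I_{NP},I_M)\in\mathbb{R}^5_{\ge0}:\ S_P+I_P+S_{NP}+I_{NP}\le1,\ I_M\le1\}$. *)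

theory Defs
  imports "HOL-Analysis.Analysis"
begin

definition c_pq :: "real \<Rightarrow> real \<Rightarrow> real" where
  "c_pq p q = 1 - p * (1 - q)"

definition Omega :: "(real \<times> real \<times> real \<times> real \<times> real) set" where
  "Omega = {(sP, iP, sNP, iNP, iM). 0 \<le> sP \<and> 0 \<le> iP \<and> 0 \<le> sNP \<and> 0 \<le> iNP \<and> 0 \<le> iM
             \<and> sP + iP + sNP + iNP \<le> 1 \<and> iM \<le> 1}"

end

theory Submission
  imports Defs "HOL-Real_Asymp.Real_Asymp"
begin

(* The susceptible compartments and 1 - I_M solve scalar linear equations with nonnegative
   forcing, and (I_P, I_NP, I_M) solves a cooperative linear system (nonnegative off-diagonal
   coefficients); solutions of such systems stay in the nonnegative orthant.
   For the decay, S + I is nonincreasing with derivative -\<gamma> I, so S and S + I converge and the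
   limit of I must be 0; then I_M' = g - \<mu> I_M with a forcing term g that tends to 0. *)

lemma has_real_derivative_nonneg_imp_le:
  fixes f f' :: "real \<Rightarrow> real"
  assumes deriv: "\<And>t. 0 \<le> t \<Longrightarrow> (f has_real_derivative f' t) (at t within {0..})"
    and "0 \<le> a" "a \<le> b" and nonneg: "\<And>t. a \<le> t \<Longrightarrow> t \<le> b \<Longrightarrow> 0 \<le> f' t"
  shows "f a \<le> f b"
proof (rule DERIV_nonneg_imp_increasing_open[OF \<open>a \<le> b\<close>])
  fix t assume t: "a < t" "t < b"
  with \<open>0 \<le> a\<close> have "at t within {0..} = at t"
    by (intro at_within_interior) simp
  with deriv[of t] nonneg[of t] t \<open>0 \<le> a\<close> show "\<exists>y. DERIV f t :> y \<and> 0 \<le> y"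
    by auto
next
  have "continuous_on {0..} f"
    by (rule DERIV_continuous_on) (use deriv in auto)
  then show "continuous_on {a..b} f"
    by (rule continuous_on_subset) (use \<open>0 \<le> a\<close> in auto)
qed

lemma strictly_inward_imp_pos:
  fixes z D :: "'i \<Rightarrow> real \<Rightarrow> real"
  assumes "finite I"
    and deriv: "\<And>i t. i \<in> I \<Longrightarrow> 0 \<le> t \<Longrightarrow> (z i has_real_derivative D i t) (at t within {0..})"
    and inward: "\<And>i t. i \<in> I \<Longrightarrow> 0 \<le> t \<Longrightarrow> t \<le> T \<Longrightarrow> z i t = 0 \<Longrightarrow> (\<forall>j\<in>I. 0 \<le> z j t)
                   \<Longrightarrow> 0 < D i t"
    and init: "\<And>i. i \<in> I \<Longrightarrow> 0 < z i 0"
    and "i \<in> I" "0 \<le> t" "t \<le> T"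
  shows "0 < z i t"
proof (rule ccontr)
  assume "\<not> 0 < z i t"
  have cont: "continuous_on S (z j)" if "j \<in> I" "S \<subseteq> {0..}" for j S
    using DERIV_continuous_on[of "{0..}" "z j"] deriv \<open>j \<in> I\<close> continuous_on_subset \<open>S \<subseteq> {0..}\<close>
    by (metis atLeast_iff)
  define Z where "Z = (\<Union>j\<in>I. {s \<in> {0..T}. z j s \<le> 0})"
  have "Z \<noteq> {}"
    using \<open>i \<in> I\<close> \<open>0 \<le> t\<close> \<open>t \<le> T\<close> \<open>\<not> 0 < z i t\<close> by (force simp: Z_def)
  moreover have "closed Z"
    unfolding Z_def using \<open>finite I\<close> cont
    by (intro closed_UN ballI continuous_on_closed_Collect_le continuous_on_const) auto
  moreover have "bdd_below Z"
    by (rule bdd_belowI[of _ 0]) (auto simp: Z_def)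
  ultimately have "Inf Z \<in> Z"
    by (simp add: closed_contains_Inf)
  define \<tau> where "\<tau> = Inf Z"
  obtain k where k: "k \<in> I" "0 \<le> \<tau>" "\<tau> \<le> T" "z k \<tau> \<le> 0"
    using \<open>Inf Z \<in> Z\<close> by (auto simp: Z_def \<tau>_def)
  have before: "0 < z j s" if "j \<in> I" "0 \<le> s" "s < \<tau>" for j s
  proof (rule ccontr)
    assume "\<not> 0 < z j s"
    with that k have "s \<in> Z"
      unfolding Z_def by force
    then have "\<tau> \<le> s"
      using \<open>bdd_below Z\<close> unfolding \<tau>_def by (rule cInf_lower)
    with \<open>s < \<tau>\<close> show False by simp
  qed
  have "0 < \<tau>"
    using k init[of k] by (cases "\<tau> = 0") auto
  have at_\<tau>: "0 \<le> z j \<tau>" if "j \<in> I" for j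
  proof (rule continuous_ge_on_closure[where S = "{0..<\<tau>}" and f = "z j"])
    show "continuous_on (closure {0..<\<tau>}) (z j)"
      using \<open>0 < \<tau>\<close> \<open>j \<in> I\<close> by (intro cont) auto
    show "\<tau> \<in> closure {0..<\<tau>}"
      using \<open>0 < \<tau>\<close> by simp
  qed (use before \<open>j \<in> I\<close> in fastforce)
  with k have "z k \<tau> = 0"
    by (simp add: order_antisym)
  with inward[of k \<tau>] k at_\<tau> have "0 < D k \<tau>"
    by simp
  moreover have "DERIV (z k) \<tau> :> D k \<tau>"
    using deriv[of k \<tau>] k \<open>0 < \<tau>\<close> at_within_interior[of \<tau> "{0..}"] by simp
  ultimately obtain d where "0 < d" and dec: "\<And>h. 0 < h \<Longrightarrow> h < d \<Longrightarrow> z k (\<tau> - h) < z k \<tau>"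
    using DERIV_pos_inc_left by blast
  define h where "h = min (d / 2) (\<tau> / 2)"
  have "z k (\<tau> - h) < 0"
    using dec[of h] \<open>0 < d\<close> \<open>0 < \<tau>\<close> \<open>z k \<tau> = 0\<close> by (simp add: h_def)
  moreover have "0 < z k (\<tau> - h)"
    using before[of k "\<tau> - h"] k \<open>0 < d\<close> \<open>0 < \<tau>\<close> by (simp add: h_def)
  ultimately show False by simp
qed

lemma cooperative_linear_system_nonneg:
  fixes x f :: "'i \<Rightarrow> real \<Rightarrow> real" and A :: "'i \<Rightarrow> 'i \<Rightarrow> real \<Rightarrow> real"
  assumes "finite I"
    and deriv: "\<And>i t. i \<in> I \<Longrightarrow> 0 \<le> t \<Longrightarrow>
                  (x i has_real_derivative (\<Sum>j\<in>I. A i j t * x j t) + f i t) (at t within {0..})"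
    and cont: "\<And>i j. i \<in> I \<Longrightarrow> j \<in> I \<Longrightarrow> continuous_on {0..} (A i j)"
    and cooperative: "\<And>i j t. i \<in> I \<Longrightarrow> j \<in> I \<Longrightarrow> i \<noteq> j \<Longrightarrow> 0 \<le> t \<Longrightarrow> 0 \<le> A i j t"
    and forcing: "\<And>i t. i \<in> I \<Longrightarrow> 0 \<le> t \<Longrightarrow> 0 \<le> f i t"
    and init: "\<And>i. i \<in> I \<Longrightarrow> 0 \<le> x i 0"
    and "i \<in> I" "0 \<le> t"
  shows "0 \<le> x i t"
proof -
  define row_bound where "row_bound s = (\<Sum>i\<in>I. \<bar>\<Sum>j\<in>I. A i j s\<bar>)" for s
  have "continuous_on {0..t} row_bound"
    unfolding row_bound_def
    by (intro continuous_intros continuous_on_subset[OF cont]) auto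
  then obtain s\<^sub>0 where s\<^sub>0: "\<forall>s\<in>{0..t}. row_bound s \<le> row_bound s\<^sub>0"
    using continuous_attains_sup[of "{0..t}" row_bound] \<open>0 \<le> t\<close> by auto
  define L where "L = row_bound s\<^sub>0 + 1"
  have L: "(\<Sum>j\<in>I. A i j s) < L" if "i \<in> I" "s \<in> {0..t}" for i s
  proof -
    have "(\<Sum>j\<in>I. A i j s) \<le> row_bound s"
      unfolding row_bound_def
      using member_le_sum[of i I "\<lambda>i. \<bar>\<Sum>j\<in>I. A i j s\<bar>"] \<open>finite I\<close> \<open>i \<in> I\<close> by simp
    also have "\<dots> < L"
      using bspec[OF s\<^sub>0 \<open>s \<in> {0..t}\<close>] unfolding L_def by linarith
    finally show ?thesis .
  qed
  \<comment> \<open>Since L exceeds every row sum of A, adding \<epsilon> exp (L s) to all components makes the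
      field point strictly into the orthant.\<close>
  have perturbed: "0 < x i t + \<epsilon> * exp (L * t)" if "0 < \<epsilon>" for \<epsilon>
  proof (rule strictly_inward_imp_pos[where z = "\<lambda>j s. x j s + \<epsilon> * exp (L * s)" and T = t])
    fix j and s :: real assume "j \<in> I" "0 \<le> s"
    show "((\<lambda>s. x j s + \<epsilon> * exp (L * s)) has_real_derivative
        (\<Sum>k\<in>I. A j k s * x k s) + f j s + \<epsilon> * exp (L * s) * L) (at s within {0..})"
      using deriv[OF \<open>j \<in> I\<close> \<open>0 \<le> s\<close>] by (auto intro!: derivative_eq_intros)
  next
    fix j and s :: real assume j: "j \<in> I" "0 \<le> s" "s \<le> t" and zero: "x j s + \<epsilon> * exp (L * s) = 0"
      and orthant: "\<forall>k\<in>I. 0 \<le> x k s + \<epsilon> * exp (L * s)"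
    define c where "c = \<epsilon> * exp (L * s)"
    have "0 \<le> A j k s * (x k s + c)" if "k \<in> I" for k
      using that j zero orthant cooperative[of j k s] by (cases "k = j") (auto simp: c_def)
    then have "0 \<le> (\<Sum>k\<in>I. A j k s * (x k s + c))"
      by (rule sum_nonneg)
    also have "\<dots> = (\<Sum>k\<in>I. A j k s * x k s) + c * (\<Sum>k\<in>I. A j k s)"
      by (simp add: distrib_left sum.distrib sum_distrib_left mult.commute)
    finally have "0 \<le> (\<Sum>k\<in>I. A j k s * x k s) + c * (\<Sum>k\<in>I. A j k s)" .
    moreover have "c * (\<Sum>k\<in>I. A j k s) < c * L"
      using L[of j s] j \<open>0 < \<epsilon>\<close> by (simp add: c_def)
    moreover have "0 \<le> f j s"
      using forcing j by simp
    ultimately show "0 < (\<Sum>k\<in>I. A j k s * x k s) + f j s + \<epsilon> * exp (L * s) * L"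
      unfolding c_def by linarith
  qed (use \<open>finite I\<close> \<open>i \<in> I\<close> \<open>0 \<le> t\<close> in \<open>auto intro: add_nonneg_pos init \<open>0 < \<epsilon>\<close>\<close>)
  have "0 \<le> x i t + e" if "0 < e" for e
    using perturbed[of "e / exp (L * t)"] that by (simp add: less_imp_le)
  then show ?thesis
    by (rule field_le_epsilon)
qed

lemma linear_ode_nonneg:
  fixes x k f :: "real \<Rightarrow> real"
  assumes "\<And>t. 0 \<le> t \<Longrightarrow> (x has_real_derivative k t * x t + f t) (at t within {0..})"
    and "continuous_on {0..} k" and "\<And>t. 0 \<le> t \<Longrightarrow> 0 \<le> f t" and "0 \<le> x 0" and "0 \<le> t"
  shows "0 \<le> x t"
  using cooperative_linear_system_nonneg[of "{()}" "\<lambda>_. x" "\<lambda>_ _. k" "\<lambda>_. f"] assms by simp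

lemma deriv_nonpos_nonneg_convergent:
  fixes f f' :: "real \<Rightarrow> real"
  assumes deriv: "\<And>t. 0 \<le> t \<Longrightarrow> (f has_real_derivative f' t) (at t within {0..})"
    and nonpos: "\<And>t. 0 \<le> t \<Longrightarrow> f' t \<le> 0" and nonneg: "\<And>t. 0 \<le> t \<Longrightarrow> 0 \<le> f t"
  shows "\<exists>L. (f \<longlongrightarrow> L) at_top"
proof -
  have antimono: "f t \<le> f s" if "0 \<le> s" "s \<le> t" for s t
    using has_real_derivative_nonneg_imp_le[of "\<lambda>t. - f t" "\<lambda>t. - f' t" s t]
      deriv nonpos that by (auto intro!: derivative_eq_intros)
  define L where "L = Inf (f ` {0..})"
  have bdd: "bdd_below (f ` {0..})"
    using nonneg by (intro bdd_belowI[of _ 0]) auto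
  have "(f \<longlongrightarrow> L) at_top"
  proof (rule decreasing_tendsto)
    show "\<forall>\<^sub>F t in at_top. L \<le> f t"
      using eventually_ge_at_top[of "0::real"]
      by eventually_elim (auto simp: L_def intro!: cInf_lower bdd)
  next
    fix y assume "L < y"
    then obtain s where s: "0 \<le> s" "f s < y"
      using cInf_less_iff[OF _ bdd, of y] by (auto simp: L_def)
    show "\<forall>\<^sub>F t in at_top. f t < y"
      using eventually_ge_at_top[of s] by eventually_elim (use antimono s in force)
  qed
  then show ?thesis ..
qed

lemma nonneg_imp_deriv_limit_nonneg:
  fixes f f' :: "real \<Rightarrow> real"
  assumes deriv: "\<And>t. 0 \<le> t \<Longrightarrow> (f has_real_derivative f' t) (at t within {0..})"
    and nonneg: "\<And>t. 0 \<le> t \<Longrightarrow> 0 \<le> f t" and lim: "(f' \<longlongrightarrow> L) at_top"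
  shows "0 \<le> L"
proof (rule ccontr)
  assume "\<not> 0 \<le> L"
  then have "\<forall>\<^sub>F t in at_top. f' t < L / 2"
    using order_tendstoD(2)[OF lim, of "L / 2"] by simp
  then obtain T where T: "0 \<le> T" "\<And>t. T \<le> t \<Longrightarrow> f' t < L / 2"
    unfolding eventually_at_top_linorder by (metis max.cobounded2 max.boundedE)
  define t where "t = T + 2 * (f T + 1) / (- L)"
  have "0 \<le> 2 * (f T + 1) / (- L)"
    using nonneg[OF \<open>0 \<le> T\<close>] \<open>\<not> 0 \<le> L\<close> by (intro divide_nonneg_pos) auto
  then have "T \<le> t"
    by (simp add: t_def)
  have "f t - L / 2 * t \<le> f T - L / 2 * T"
    using has_real_derivative_nonneg_imp_le[of "\<lambda>t. L / 2 * t - f t" "\<lambda>t. L / 2 - f' t" T t]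
      deriv T \<open>T \<le> t\<close> by (fastforce intro!: derivative_eq_intros)
  also have "\<dots> = f T - L / 2 * t - (f T + 1)"
    using \<open>\<not> 0 \<le> L\<close> by (simp add: t_def field_simps)
  finally have "f t \<le> -1"
    by simp
  with nonneg[of t] \<open>0 \<le> T\<close> \<open>T \<le> t\<close> show False
    by simp
qed

lemma compartment_outflow_tendsto_zero:
  fixes S I D :: "real \<Rightarrow> real" and \<gamma> :: real
  assumes "0 < \<gamma>"
    and dS: "\<And>t. 0 \<le> t \<Longrightarrow> (S has_real_derivative D t) (at t within {0..})"
    and dI: "\<And>t. 0 \<le> t \<Longrightarrow> (I has_real_derivative - D t - \<gamma> * I t) (at t within {0..})"
    and D_nonpos: "\<And>t. 0 \<le> t \<Longrightarrow> D t \<le> 0"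
    and S_nonneg: "\<And>t. 0 \<le> t \<Longrightarrow> 0 \<le> S t" and I_nonneg: "\<And>t. 0 \<le> t \<Longrightarrow> 0 \<le> I t"
  shows "(I \<longlongrightarrow> 0) at_top"
proof -
  define V where "V t = S t + I t" for t
  have dV: "(V has_real_derivative - \<gamma> * I t) (at t within {0..})" if "0 \<le> t" for t
    unfolding V_def using dS[OF that] dI[OF that] by (auto intro!: derivative_eq_intros)
  have V_nonneg: "0 \<le> V t" if "0 \<le> t" for t
    using S_nonneg[OF that] I_nonneg[OF that] by (simp add: V_def)
  obtain LS where LS: "(S \<longlongrightarrow> LS) at_top"
    using deriv_nonpos_nonneg_convergent[OF dS D_nonpos S_nonneg] by blast
  have "- \<gamma> * I t \<le> 0" if "0 \<le> t" for t
    using \<open>0 < \<gamma>\<close> I_nonneg[OF that] by simp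
  then obtain LV where LV: "(V \<longlongrightarrow> LV) at_top"
    using deriv_nonpos_nonneg_convergent[OF dV _ V_nonneg] by blast
  have I_lim: "(I \<longlongrightarrow> LV - LS) at_top"
    using tendsto_diff[OF LV LS] by (simp add: V_def)
  have "0 \<le> - \<gamma> * (LV - LS)"
    by (rule nonneg_imp_deriv_limit_nonneg[OF dV V_nonneg tendsto_mult_left[OF I_lim]])
  moreover have "\<forall>\<^sub>F t in at_top. 0 \<le> I t"
    using eventually_ge_at_top[of "0::real"] by (rule eventually_mono) (rule I_nonneg)
  then have "0 \<le> LV - LS"
    using tendsto_lowerbound[OF I_lim] trivial_limit_at_top_linorder by blast
  ultimately have "LV - LS = 0"
    using \<open>0 < \<gamma>\<close> by (simp add: mult_le_0_iff)
  with I_lim show ?thesis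
    by simp
qed

lemma damped_linear_ode_eventually_less:
  fixes x g :: "real \<Rightarrow> real"
  assumes "0 < \<mu>" and deriv: "\<And>t. 0 \<le> t \<Longrightarrow> (x has_real_derivative g t - \<mu> * x t) (at t within {0..})"
    and "(g \<longlongrightarrow> 0) at_top" and "0 < \<epsilon>"
  shows "\<forall>\<^sub>F t in at_top. x t < \<epsilon>"
proof -
  have "\<forall>\<^sub>F t in at_top. g t < \<mu> * \<epsilon> / 2"
    using order_tendstoD(2)[OF \<open>(g \<longlongrightarrow> 0) at_top\<close>, of "\<mu> * \<epsilon> / 2"] \<open>0 < \<mu>\<close> \<open>0 < \<epsilon>\<close>
    by simp
  then obtain T where T: "0 \<le> T" "\<And>t. T \<le> t \<Longrightarrow> g t < \<mu> * \<epsilon> / 2"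
    unfolding eventually_at_top_linorder by (metis max.cobounded2 max.boundedE)
  define W where "W t = (x t - \<epsilon> / 2) * exp (\<mu> * t)" for t
  have W_le: "W t \<le> W T" if "T \<le> t" for t
  proof -
    have "((\<lambda>t. - W t) has_real_derivative (\<mu> * \<epsilon> / 2 - g t) * exp (\<mu> * t)) (at t within {0..})"
      if "0 \<le> t" for t
      unfolding W_def using deriv[OF that]
      by (auto intro!: derivative_eq_intros simp: algebra_simps)
    from has_real_derivative_nonneg_imp_le[OF this \<open>0 \<le> T\<close> \<open>T \<le> t\<close>] T(2) show ?thesis
      by (simp add: less_imp_le)
  qed
  have "((\<lambda>t. W T * exp (- (\<mu> * t))) \<longlongrightarrow> 0) at_top"
    using \<open>0 < \<mu>\<close> by real_asymp
  then have "\<forall>\<^sub>F t in at_top. W T * exp (- (\<mu> * t)) < \<epsilon> / 2"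
    by (rule order_tendstoD(2)) (use \<open>0 < \<epsilon>\<close> in simp)
  then show ?thesis
    using eventually_ge_at_top[of T]
  proof eventually_elim
    case (elim t)
    then have "(x t - \<epsilon> / 2) * exp (\<mu> * t) \<le> W T"
      using W_le by (simp add: W_def)
    then have "x t - \<epsilon> / 2 \<le> W T * exp (- (\<mu> * t))"
      by (simp add: exp_minus field_simps)
    with elim show ?case
      by simp
  qed
qed

lemma damped_linear_ode_tendsto_zero:
  fixes x g :: "real \<Rightarrow> real"
  assumes "0 < \<mu>" and deriv: "\<And>t. 0 \<le> t \<Longrightarrow> (x has_real_derivative g t - \<mu> * x t) (at t within {0..})"
    and "(g \<longlongrightarrow> 0) at_top"
  shows "(x \<longlongrightarrow> 0) at_top"
proof (rule order_tendstoI)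
  fix \<epsilon> :: real assume "\<epsilon> < 0"
  have "((\<lambda>t. - x t) has_real_derivative - g t - \<mu> * - x t) (at t within {0..})" if "0 \<le> t" for t
    using deriv[OF that] by (auto intro!: derivative_eq_intros)
  from damped_linear_ode_eventually_less[OF \<open>0 < \<mu>\<close> this _ , of "- \<epsilon>"]
  show "\<forall>\<^sub>F t in at_top. \<epsilon> < x t"
    using tendsto_minus[OF \<open>(g \<longlongrightarrow> 0) at_top\<close>] \<open>\<epsilon> < 0\<close> by simp
qed (rule damped_linear_ode_eventually_less[OF assms])

locale vbh_solution =
  fixes SP IP SNP INP IM :: "real \<Rightarrow> real" and a b \<gamma> \<mu> q :: real
  assumes rates_pos: "0 < a" "0 < b" "0 < \<gamma>" "0 < \<mu>"
    and q_range: "0 \<le> q" "q \<le> 1"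
    and init: "(SP 0, IP 0, SNP 0, INP 0, IM 0) \<in> Omega"
    and SP_deriv: "\<And>t. 0 \<le> t \<Longrightarrow> (SP has_real_derivative - (a * q * IM t * SP t)) (at t within {0..})"
    and IP_deriv: "\<And>t. 0 \<le> t \<Longrightarrow>
                     (IP has_real_derivative a * q * IM t * SP t - \<gamma> * IP t) (at t within {0..})"
    and SNP_deriv: "\<And>t. 0 \<le> t \<Longrightarrow> (SNP has_real_derivative - (a * IM t * SNP t)) (at t within {0..})"
    and INP_deriv: "\<And>t. 0 \<le> t \<Longrightarrow>
                      (INP has_real_derivative a * IM t * SNP t - \<gamma> * INP t) (at t within {0..})"
    and IM_deriv: "\<And>t. 0 \<le> t \<Longrightarrow> (IM has_real_derivative
                     b * (1 - IM t) * (q * IP t + INP t) - \<mu> * IM t) (at t within {0..})"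
begin

lemma init_nonneg: "0 \<le> SP 0" "0 \<le> IP 0" "0 \<le> SNP 0" "0 \<le> INP 0" "0 \<le> IM 0" "IM 0 \<le> 1"
  using init by (auto simp: Omega_def)

lemma continuous_on_compartments:
  "continuous_on {0..} SP" "continuous_on {0..} IP" "continuous_on {0..} SNP"
  "continuous_on {0..} INP" "continuous_on {0..} IM"
  by (auto intro!: DERIV_continuous_on SP_deriv IP_deriv SNP_deriv INP_deriv IM_deriv)

lemma SP_nonneg: "0 \<le> t \<Longrightarrow> 0 \<le> SP t"
  by (rule linear_ode_nonneg[where k = "\<lambda>t. - (a * q * IM t)" and f = "\<lambda>_. 0"])
    (auto intro!: DERIV_cong[OF SP_deriv] continuous_intros continuous_on_compartments
      simp: init_nonneg)

lemma SNP_nonneg: "0 \<le> t \<Longrightarrow> 0 \<le> SNP t"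
  by (rule linear_ode_nonneg[where k = "\<lambda>t. - (a * IM t)" and f = "\<lambda>_. 0"])
    (auto intro!: DERIV_cong[OF SNP_deriv] continuous_intros continuous_on_compartments
      simp: init_nonneg)

lemma IM_le_one: "0 \<le> t \<Longrightarrow> IM t \<le> 1"
  using linear_ode_nonneg[where x = "\<lambda>t. 1 - IM t" and k = "\<lambda>t. - (b * (q * IP t + INP t) + \<mu>)"
      and f = "\<lambda>_. \<mu>"] rates_pos init_nonneg
  by (force intro!: derivative_eq_intros IM_deriv continuous_intros continuous_on_compartments
      simp: algebra_simps)

lemma infected_nonneg:
  assumes "0 \<le> t"
  shows "0 \<le> IP t" "0 \<le> INP t" "0 \<le> IM t"
proof -
  define x where "x = (\<lambda>i. [IP, INP, IM] ! i)"
  define A where "A = (\<lambda>i j t. [[- \<gamma>, 0, a * q * SP t],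
                                [0, - \<gamma>, a * SNP t],
                                [b * q * (1 - IM t), b * (1 - IM t), - \<mu>]] ! i ! j)"
  have "0 \<le> x i t" if "i \<in> {0, 1, 2}" for i
  proof (rule cooperative_linear_system_nonneg
      [where I = "{0, 1, 2}" and x = x and A = A and f = "\<lambda>_ _. 0"])
    fix i j :: nat assume "i \<in> {0, 1, 2}" "j \<in> {0, 1, 2}"
    then show "continuous_on {0..} (A i j)"
      unfolding A_def using continuous_on_compartments
      by (auto intro!: continuous_on_mult continuous_on_diff continuous_on_const)
  next
    fix i j :: nat and s :: real assume "i \<in> {0, 1, 2}" "j \<in> {0, 1, 2}" "i \<noteq> j" "0 \<le> s"
    then show "0 \<le> A i j s"
      using rates_pos q_range SP_nonneg[OF \<open>0 \<le> s\<close>] SNP_nonneg[OF \<open>0 \<le> s\<close>] IM_le_one[OF \<open>0 \<le> s\<close>]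
      by (auto simp: A_def)
  next
    fix i :: nat and s :: real assume "i \<in> {0, 1, 2}" "0 \<le> s"
    have "(\<Sum>j\<in>{0, 1, 2}. A 0 j s * x j s) + 0 = a * q * IM s * SP s - \<gamma> * IP s"
      and "(\<Sum>j\<in>{0, 1, 2}. A 1 j s * x j s) + 0 = a * IM s * SNP s - \<gamma> * INP s"
      and "(\<Sum>j\<in>{0, 1, 2}. A 2 j s * x j s) + 0 = b * (1 - IM s) * (q * IP s + INP s) - \<mu> * IM s"
      by (simp_all add: A_def x_def algebra_simps)
    with \<open>i \<in> {0, 1, 2}\<close> IP_deriv[OF \<open>0 \<le> s\<close>] INP_deriv[OF \<open>0 \<le> s\<close>] IM_deriv[OF \<open>0 \<le> s\<close>]
    show "(x i has_real_derivative (\<Sum>j\<in>{0, 1, 2}. A i j s * x j s) + 0) (at s within {0..})"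
      by (auto simp: x_def)
  qed (use that \<open>0 \<le> t\<close> init_nonneg in \<open>auto simp: x_def\<close>)
  from this[of 0] this[of 1] this[of 2] show "0 \<le> IP t" "0 \<le> INP t" "0 \<le> IM t"
    by (simp_all add: x_def)
qed

lemma IP_tendsto_zero: "(IP \<longlongrightarrow> 0) at_top"
proof (rule compartment_outflow_tendsto_zero[OF _ SP_deriv])
  fix t :: real assume "0 \<le> t"
  show "(IP has_real_derivative - (- (a * q * IM t * SP t)) - \<gamma> * IP t) (at t within {0..})"
    using IP_deriv[OF \<open>0 \<le> t\<close>] by simp
  show "- (a * q * IM t * SP t) \<le> 0"
    using rates_pos q_range infected_nonneg[OF \<open>0 \<le> t\<close>] SP_nonneg[OF \<open>0 \<le> t\<close>] by simp
qed (use rates_pos SP_nonneg infected_nonneg in auto)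

lemma INP_tendsto_zero: "(INP \<longlongrightarrow> 0) at_top"
proof (rule compartment_outflow_tendsto_zero[OF _ SNP_deriv])
  fix t :: real assume "0 \<le> t"
  show "(INP has_real_derivative - (- (a * IM t * SNP t)) - \<gamma> * INP t) (at t within {0..})"
    using INP_deriv[OF \<open>0 \<le> t\<close>] by simp
  show "- (a * IM t * SNP t) \<le> 0"
    using rates_pos infected_nonneg[OF \<open>0 \<le> t\<close>] SNP_nonneg[OF \<open>0 \<le> t\<close>] by simp
qed (use rates_pos SNP_nonneg infected_nonneg in auto)

lemma IM_tendsto_zero: "(IM \<longlongrightarrow> 0) at_top"
proof (rule damped_linear_ode_tendsto_zero[OF _ IM_deriv])
  define h where "h t = b * (q * IP t + INP t)" for t
  have "(h \<longlongrightarrow> b * (q * 0 + 0)) at_top"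
    unfolding h_def by (intro tendsto_intros IP_tendsto_zero INP_tendsto_zero)
  then have h_lim: "(h \<longlongrightarrow> 0) at_top"
    by simp
  have "0 \<le> b * (1 - IM t) * (q * IP t + INP t) \<and> b * (1 - IM t) * (q * IP t + INP t) \<le> h t"
    if "0 \<le> t" for t
  proof -
    have "0 \<le> q * IP t + INP t" "0 \<le> 1 - IM t" "1 - IM t \<le> 1"
      using q_range infected_nonneg[OF that] IM_le_one[OF that] by auto
    then show ?thesis
      using rates_pos by (simp add: h_def mult_right_mono mult_left_le_one_le)
  qed
  then have "\<forall>\<^sub>F t in at_top. 0 \<le> b * (1 - IM t) * (q * IP t + INP t)
      \<and> b * (1 - IM t) * (q * IP t + INP t) \<le> h t"
    using eventually_ge_at_top[of "0::real"] by (rule eventually_mono[rotated])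
  then show "((\<lambda>t. b * (1 - IM t) * (q * IP t + INP t)) \<longlongrightarrow> 0) at_top"
    by (intro tendsto_sandwich[OF _ _ tendsto_const h_lim]) (auto elim: eventually_mono)
qed (use rates_pos in simp)

end

theorem mainTheorem6:
  fixes SP IP SNP INP IM :: "real \<Rightarrow> real"
    and bHM bMH \<rho> \<gamma> \<mu> l p q :: real
  assumes "bHM > 0" "bMH > 0" "\<rho> > 0" "\<gamma> > 0" "\<mu> > 0" "l \<ge> 0"
    and "0 \<le> p" "p \<le> 1" "0 \<le> q" "q \<le> 1"
    and "c_pq p q + l > 0"
    and "(SP 0, IP 0, SNP 0, INP 0, IM 0) \<in> Omega"
    and "\<And>t. t \<ge> 0 \<Longrightarrow> (SP has_real_derivative
            (- bHM * \<rho> * IM t * (q * SP t) / (c_pq p q + l))) (at t within {0..})"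
    and "\<And>t. t \<ge> 0 \<Longrightarrow> (IP has_real_derivative
            (bHM * \<rho> * IM t * (q * SP t) / (c_pq p q + l) - \<gamma> * IP t)) (at t within {0..})"
    and "\<And>t. t \<ge> 0 \<Longrightarrow> (SNP has_real_derivative
            (- bHM * \<rho> * IM t * SNP t / (c_pq p q + l))) (at t within {0..})"
    and "\<And>t. t \<ge> 0 \<Longrightarrow> (INP has_real_derivative
            (bHM * \<rho> * IM t * SNP t / (c_pq p q + l) - \<gamma> * INP t)) (at t within {0..})"
    and "\<And>t. t \<ge> 0 \<Longrightarrow> (IM has_real_derivative
            (bMH * (1 - IM t) * (q * IP t + INP t) / (c_pq p q + l) - \<mu> * IM t)) (at t within {0..})"
  shows "(IP \<longlongrightarrow> 0) at_top \<and> (INP \<longlongrightarrow> 0) at_top \<and> (IM \<longlongrightarrow> 0) at_top"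
proof -
  define C where "C = c_pq p q + l"
  interpret vbh_solution SP IP SNP INP IM "bHM * \<rho> / C" "bMH / C" \<gamma> \<mu> q
  proof
    fix t :: real assume t: "0 \<le> t"
    show "(SP has_real_derivative - (bHM * \<rho> / C * q * IM t * SP t)) (at t within {0..})"
      by (rule DERIV_cong[OF assms(13)[OF t]]) (simp add: C_def field_simps)
    show "(IP has_real_derivative bHM * \<rho> / C * q * IM t * SP t - \<gamma> * IP t) (at t within {0..})"
      by (rule DERIV_cong[OF assms(14)[OF t]]) (simp add: C_def field_simps)
    show "(SNP has_real_derivative - (bHM * \<rho> / C * IM t * SNP t)) (at t within {0..})"
      by (rule DERIV_cong[OF assms(15)[OF t]]) (simp add: C_def field_simps)
    show "(INP has_real_derivative bHM * \<rho> / C * IM t * SNP t - \<gamma> * INP t) (at t within {0..})"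
      by (rule DERIV_cong[OF assms(16)[OF t]]) (simp add: C_def field_simps)
    show "(IM has_real_derivative
        bMH / C * (1 - IM t) * (q * IP t + INP t) - \<mu> * IM t) (at t within {0..})"
      by (rule DERIV_cong[OF assms(17)[OF t]]) (simp add: C_def field_simps)
  qed (use assms in \<open>simp_all add: C_def\<close>)
  show ?thesis
    using IP_tendsto_zero INP_tendsto_zero IM_tendsto_zero by simp
qed

end
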